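(* Let $k\ge 2$, let $H$ be a digraph (possibly with loops), and let $D$ be an $H$-colored local tournament. If every directed cycle in $D$ has $H$-length at most $k-2$, then $D$ has a $(k,H)$-kernel.
   Context: All digraphs are finite. A local tournament is a digraph $D$ such that for every vertex $x$, both the subdigraph induced by the in-neighbourhood $N^-(x)$ and that induced by the out-neighbourhood $N^+(x)$ are tournaments (every two distinct vertices joined by exactly one arc). $D$ has no loops and comes with a map $\rho: A(D)\to V(H)$. For a walk $W=(x_0,\ldots,x_n)$ in $D$, there is an obstruction on $x_i$ if $(\rho(x_{i-1},x_i),\rho(x_i,x_{i+1})) \notin A(H)$; for an open walk this is considered at internal vertices $x_i$, $1\le i\le n-1$, for a closed walk (such as a cycle) at all $i\in\{0,\ldots,n-1\}$ with indices modulo $n$. $O_H(W)$ is the set of indices with an obstruction; the $H$-length is $l_H(W)=|O_H(W)|+1$ for open $W$ and $|O_H(W)|$ for closed $W$. A $(k,H)$-kernel ($k\ge2$) is a set $S\subseteq V(D)$ such that for every two distinct $u,v\in S$ every directed $uv$-path in $D$ has $H$-length at least $k$, and for every $x\in V(D)\setminus S$ there is a directed path from $x$ to a vertex of $S$ of $H$-length at most $k-1$. *)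

theory Defs
  imports Main
begin

definition digraph :: "'a set \<Rightarrow> ('a \<times> 'a) set \<Rightarrow> bool" where
  "digraph V A \<longleftrightarrow> finite V \<and> A \<subseteq> V \<times> V"

definition loopless :: "('a \<times> 'a) set \<Rightarrow> bool" where
  "loopless A \<longleftrightarrow> (\<forall>x. (x, x) \<notin> A)"

definition is_tournament_on :: "'a set \<Rightarrow> ('a \<times> 'a) set \<Rightarrow> bool" where
  "is_tournament_on X A \<longleftrightarrow>
     (\<forall>u\<in>X. \<forall>v\<in>X. u \<noteq> v \<longrightarrow> ((u, v) \<in> A \<longleftrightarrow> (v, u) \<notin> A))"

definition in_nbhd :: "('a \<times> 'a) set \<Rightarrow> 'a \<Rightarrow> 'a set" where
  "in_nbhd A x = {y. (y, x) \<in> A}"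

definition out_nbhd :: "('a \<times> 'a) set \<Rightarrow> 'a \<Rightarrow> 'a set" where
  "out_nbhd A x = {y. (x, y) \<in> A}"

definition local_tournament :: "'a set \<Rightarrow> ('a \<times> 'a) set \<Rightarrow> bool" where
  "local_tournament V A \<longleftrightarrow> digraph V A \<and> loopless A \<and>
     (\<forall>x\<in>V. is_tournament_on (in_nbhd A x) A \<and> is_tournament_on (out_nbhd A x) A)"

definition H_colored :: "('a \<times> 'a) set \<Rightarrow> 'c set \<Rightarrow> ('c \<times> 'c) set \<Rightarrow> ('a \<times> 'a \<Rightarrow> 'c) \<Rightarrow> bool" where
  "H_colored A VH AH rho \<longleftrightarrow> digraph VH AH \<and> (\<forall>e\<in>A. rho e \<in> VH)"

definition dpath :: "'a set \<Rightarrow> ('a \<times> 'a) set \<Rightarrow> 'a list \<Rightarrow> bool" where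
  "dpath V A xs \<longleftrightarrow> xs \<noteq> [] \<and> distinct xs \<and> set xs \<subseteq> V \<and>
     (\<forall>i. Suc i < length xs \<longrightarrow> (xs ! i, xs ! Suc i) \<in> A)"

definition dcycle :: "'a set \<Rightarrow> ('a \<times> 'a) set \<Rightarrow> 'a list \<Rightarrow> bool" where
  "dcycle V A xs \<longleftrightarrow> length xs \<ge> 2 \<and> distinct xs \<and> set xs \<subseteq> V \<and>
     (\<forall>i<length xs. (xs ! i, xs ! ((i + 1) mod length xs)) \<in> A)"

definition obstr_open :: "('c \<times> 'c) set \<Rightarrow> ('a \<times> 'a \<Rightarrow> 'c) \<Rightarrow> 'a list \<Rightarrow> nat set" where
  "obstr_open AH rho xs = {i. 1 \<le> i \<and> Suc i < length xs \<and>
     (rho (xs ! (i - 1), xs ! i), rho (xs ! i, xs ! Suc i)) \<notin> AH}"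

definition H_length_open :: "('c \<times> 'c) set \<Rightarrow> ('a \<times> 'a \<Rightarrow> 'c) \<Rightarrow> 'a list \<Rightarrow> nat" where
  "H_length_open AH rho xs = card (obstr_open AH rho xs) + 1"

definition obstr_closed :: "('c \<times> 'c) set \<Rightarrow> ('a \<times> 'a \<Rightarrow> 'c) \<Rightarrow> 'a list \<Rightarrow> nat set" where
  "obstr_closed AH rho xs = {i. i < length xs \<and>
     (rho (xs ! ((i + length xs - 1) mod length xs), xs ! i),
      rho (xs ! i, xs ! ((i + 1) mod length xs))) \<notin> AH}"

definition H_length_closed :: "('c \<times> 'c) set \<Rightarrow> ('a \<times> 'a \<Rightarrow> 'c) \<Rightarrow> 'a list \<Rightarrow> nat" where
  "H_length_closed AH rho xs = card (obstr_closed AH rho xs)"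

definition kH_kernel ::
  "'a set \<Rightarrow> ('a \<times> 'a) set \<Rightarrow> ('c \<times> 'c) set \<Rightarrow> ('a \<times> 'a \<Rightarrow> 'c) \<Rightarrow> nat \<Rightarrow> 'a set \<Rightarrow> bool" where
  "kH_kernel V A AH rho k S \<longleftrightarrow> S \<subseteq> V \<and>
     (\<forall>u\<in>S. \<forall>v\<in>S. u \<noteq> v \<longrightarrow>
        (\<forall>xs. dpath V A xs \<and> hd xs = u \<and> last xs = v \<longrightarrow> H_length_open AH rho xs \<ge> k)) \<and>
     (\<forall>x\<in>V - S. \<exists>xs. dpath V A xs \<and> hd xs = x \<and> last xs \<in> S \<and>
        H_length_open AH rho xs \<le> k - 1)"

end

theory Submission
  imports Defs
begin

text \<open>
  Let \<open>x R y\<close> mean that some directed \<open>xy\<close>-path has \<open>H\<close>-length at most \<open>k - 1\<close>, so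
  that a \<open>(k,H)\<close>-kernel is exactly a kernel (an independent, absorbing set) of \<open>R\<close>.
  In a local tournament two mutually reachable vertices lie on a common cycle: a cycle
  swallows any vertex that it reaches and that reaches it back, by inserting the vertex
  between two consecutive cycle vertices or, when that is impossible everywhere, because
  the whole cycle then dominates the vertex. A subpath of a cycle has \<open>H\<close>-length at most
  one more than the cycle, so \<open>R\<close> holds in both directions within a strong component.
  Hence every one-way pair of \<open>R\<close> goes strictly down the reachability preorder, and a
  kernel is built by adding vertices in order of decreasing number of vertices they reach:
  each new vertex is either absorbed by the current kernel or independent of it.
\<close>

section \<open>Paths and cycles as vertex lists\<close>

lemma dpath_iff_successively:
  "dpath V A xs \<longleftrightarrow> xs \<noteq> [] \<and> distinct xs \<and> set xs \<subseteq> V \<and> successively (\<lambda>x y. (x, y) \<in> A) xs"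
  by (simp add: dpath_def successively_conv_nth)

lemma dpath_Nil [simp]: "\<not> dpath V A []"
  by (simp add: dpath_def)

lemma dpath_Cons [simp]:
  "dpath V A (x # ys) \<longleftrightarrow>
     x \<in> V \<and> x \<notin> set ys \<and> (ys = [] \<or> (x, hd ys) \<in> A \<and> dpath V A ys)"
  by (auto simp: dpath_iff_successively successively_Cons)

lemma dpath_append:
  assumes "xs \<noteq> []" "ys \<noteq> []"
  shows "dpath V A (xs @ ys) \<longleftrightarrow>
    dpath V A xs \<and> dpath V A ys \<and> set xs \<inter> set ys = {} \<and> (last xs, hd ys) \<in> A"
  using assms by (auto simp: dpath_iff_successively successively_append_iff)

lemma dcycle_iff_dpath:
  "dcycle V A xs \<longleftrightarrow> 2 \<le> length xs \<and> dpath V A xs \<and> (last xs, hd xs) \<in> A"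
proof (cases "2 \<le> length xs")
  case True
  then have "xs \<noteq> []" by auto
  have "(\<forall>i<length xs. (xs ! i, xs ! ((i + 1) mod length xs)) \<in> A) \<longleftrightarrow>
        (\<forall>i. Suc i < length xs \<longrightarrow> (xs ! i, xs ! Suc i) \<in> A) \<and> (last xs, hd xs) \<in> A"
    (is "?cyc \<longleftrightarrow> ?path \<and> ?wrap")
  proof
    assume cyc: ?cyc
    have ?path
      using cyc by (metis Suc_eq_plus1 Suc_lessD mod_less)
    moreover have ?wrap
    proof -
      have "Suc (length xs - 1) = length xs"
        using True by simp
      then show ?wrap
        using cyc[rule_format, of "length xs - 1"] \<open>xs \<noteq> []\<close>
        by (simp add: last_conv_nth hd_conv_nth)
    qed
    ultimately show "?path \<and> ?wrap" ..
  next
    assume "?path \<and> ?wrap"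
    then show ?cyc
      using \<open>xs \<noteq> []\<close> by (metis Suc_eq_plus1 Suc_lessI hd_conv_nth last_conv_nth
          mod_less mod_self diff_Suc_1)
  qed
  then show ?thesis
    using True by (auto simp: dcycle_def dpath_def)
qed (simp add: dcycle_def)

lemma dcycle_append_swap:
  assumes "dcycle V A (xs @ ys)"
  shows "dcycle V A (ys @ xs)"
proof (cases "xs = [] \<or> ys = []")
  case False
  then show ?thesis
    using assms by (auto simp: dcycle_iff_dpath dpath_append)
qed (use assms in auto)

lemma dcycle_rotate_to:
  assumes "dcycle V A cs" "v \<in> set cs"
  obtains ys where "dcycle V A (v # ys)" "set (v # ys) = set cs"
proof -
  obtain xs ys where "cs = xs @ v # ys"
    using assms(2) by (meson split_list)
  then show thesis
    using that[of "ys @ xs"] dcycle_append_swap[of V A xs "v # ys"] assms(1) by auto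
qed

lemma dcycle_insert:
  assumes "dcycle V A (xs @ u # w # ys)" "p \<in> V" "p \<notin> set (xs @ u # w # ys)"
    and "(u, p) \<in> A" "(p, w) \<in> A"
  shows "dcycle V A (xs @ u # p # w # ys)"
  using assms by (cases "xs = []") (auto simp: dcycle_iff_dpath dpath_append)

lemma dcycle_detour:
  assumes "dcycle V A (c # zs)" "dpath V A (qs @ [c])" "qs \<noteq> []"
    and "set qs \<inter> set (c # zs) = {}" "(last (c # zs), hd qs) \<in> A"
  shows "dcycle V A ((c # zs) @ qs)"
proof -
  have "dpath V A qs" "(last qs, c) \<in> A"
    using assms(2,3) by (simp_all add: dpath_append)
  moreover have "dpath V A (c # zs)"
    using assms(1) by (simp only: dcycle_iff_dpath)
  ultimately have "dpath V A ((c # zs) @ qs)"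
    using assms(3-5) by (subst dpath_append) auto
  moreover have "2 \<le> length ((c # zs) @ qs)"
    using assms(3) by (cases qs) auto
  ultimately show ?thesis
    using \<open>(last qs, c) \<in> A\<close> assms(3) by (simp only: dcycle_iff_dpath) simp
qed

lemma dpath_imp_rtrancl: "dpath V A ps \<Longrightarrow> (hd ps, last ps) \<in> A\<^sup>*"
proof (induction ps)
  case (Cons a ps)
  then show ?case
    by (cases "ps = []") (auto intro: converse_rtrancl_into_rtrancl)
qed simp

lemma rtrancl_imp_dpath_first_hit:
  assumes "(u, v) \<in> A\<^sup>*" "v \<in> S" "A \<subseteq> V \<times> V" "u \<in> V"
  obtains ps where "dpath V A ps" "hd ps = u" "last ps \<in> S" "set (butlast ps) \<inter> S = {}"
proof -
  have "\<exists>ps. dpath V A ps \<and> hd ps = u \<and> last ps \<in> S \<and> set (butlast ps) \<inter> S = {}"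
    using assms(1,4)
  proof (induction rule: converse_rtrancl_induct)
    case base
    then show ?case
      using assms(2) by (intro exI[of _ "[v]"]) auto
  next
    case (step y z)
    then obtain ps where ps: "dpath V A ps" "hd ps = z" "last ps \<in> S" "set (butlast ps) \<inter> S = {}"
      using assms(3) by blast
    then have "ps \<noteq> []"
      by auto
    consider "y \<in> S" | "y \<notin> S" "y \<in> set ps" | "y \<notin> S" "y \<notin> set ps"
      by blast
    then show ?case
    proof cases
      case 1
      then show ?thesis
        using step.prems by (intro exI[of _ "[y]"]) auto
    next
      case 2
      then obtain as bs where split: "ps = as @ y # bs"
        by (meson split_list)
      then have "dpath V A (y # bs)"
        using ps(1) dpath_append[of as "y # bs" V A] by (cases "as = []") auto
      moreover have "set (butlast (y # bs)) \<subseteq> set (butlast ps)"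
        using split by (auto simp: butlast_append)
      ultimately show ?thesis
        using ps split by (intro exI[of _ "y # bs"]) auto
    next
      case 3
      then show ?thesis
        using ps \<open>ps \<noteq> []\<close> step.prems step.hyps(1) by (intro exI[of _ "y # ps"]) auto
    qed
  qed
  then show thesis
    using that by blast
qed

lemma rtrancl_leaves_set:
  assumes "(a, b) \<in> A\<^sup>*" "a \<in> S" "b \<notin> S"
  obtains c p where "c \<in> S" "p \<notin> S" "(c, p) \<in> A" "(p, b) \<in> A\<^sup>*"
  using assms by (induction rule: converse_rtrancl_induct) blast+

section \<open>Cycles in local tournaments\<close>

lemma local_tournament_out_nbrs_adjacent:
  assumes "local_tournament V A" "x \<in> V" "(x, u) \<in> A" "(x, w) \<in> A" "u \<noteq> w"
  shows "(u, w) \<in> A \<or> (w, u) \<in> A"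
  using assms
  unfolding local_tournament_def is_tournament_on_def out_nbhd_def by blast

lemma local_tournament_path_insert_or_dominate:
  assumes lt: "local_tournament V A" and "dpath V A xs" "(hd xs, p) \<in> A" "p \<notin> set xs"
  shows "(\<exists>as u w bs. xs = as @ u # w # bs \<and> (u, p) \<in> A \<and> (p, w) \<in> A)
    \<or> (\<forall>z\<in>set xs. (z, p) \<in> A)"
  using assms(2-4)
proof (induction xs)
  case (Cons x ys)
  show ?case
  proof (cases "ys = []")
    case False
    with Cons.prems have "x \<in> V" "(x, hd ys) \<in> A" "dpath V A ys" "p \<noteq> hd ys"
      by auto
    then consider "(p, hd ys) \<in> A" | "(hd ys, p) \<in> A"
      using local_tournament_out_nbrs_adjacent[OF lt] Cons.prems(2) by force
    then show ?thesis
    proof cases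
      case 1
      then have "x # ys = [] @ x # hd ys # tl ys \<and> (x, p) \<in> A \<and> (p, hd ys) \<in> A"
        using False Cons.prems(2) by simp
      then show ?thesis
        by blast
    next
      case 2
      then have "(\<exists>as u w bs. ys = as @ u # w # bs \<and> (u, p) \<in> A \<and> (p, w) \<in> A)
          \<or> (\<forall>z\<in>set ys. (z, p) \<in> A)"
        using Cons.IH \<open>dpath V A ys\<close> Cons.prems(3) by simp
      then show ?thesis
      proof
        assume "\<exists>as u w bs. ys = as @ u # w # bs \<and> (u, p) \<in> A \<and> (p, w) \<in> A"
        then obtain as u w bs where "x # ys = (x # as) @ u # w # bs" "(u, p) \<in> A" "(p, w) \<in> A"
          by auto
        then show ?thesis
          by blast
      qed (use Cons.prems(2) in simp)
    qed
  qed (use Cons.prems in simp)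
qed simp

lemma local_tournament_dcycle_absorb:
  assumes lt: "local_tournament V A" and cyc: "dcycle V A cs"
    and "c \<in> set cs" "(c, p) \<in> A" "p \<notin> set cs" "(p, d) \<in> A\<^sup>*" "d \<in> set cs"
  obtains cs' where "dcycle V A cs'" "insert p (set cs) \<subseteq> set cs'"
proof -
  have AV: "A \<subseteq> V \<times> V"
    using lt by (simp add: local_tournament_def digraph_def)
  with assms(4) have "p \<in> V"
    by auto
  obtain ys where ys: "dcycle V A (c # ys)" "set (c # ys) = set cs"
    using dcycle_rotate_to[OF cyc assms(3)] .
  then have "dpath V A (c # ys)"
    by (simp add: dcycle_iff_dpath)
  moreover have "(hd (c # ys), p) \<in> A" "p \<notin> set (c # ys)"
    using assms(4,5) ys(2) by simp_all
  ultimately have "(\<exists>as u w bs. c # ys = as @ u # w # bs \<and> (u, p) \<in> A \<and> (p, w) \<in> A)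
    \<or> (\<forall>z\<in>set (c # ys). (z, p) \<in> A)"
    by (rule local_tournament_path_insert_or_dominate[OF lt])
  then consider as u w bs where "c # ys = as @ u # w # bs" "(u, p) \<in> A" "(p, w) \<in> A"
    | "\<forall>z\<in>set cs. (z, p) \<in> A"
    using ys(2) by blast
  then show thesis
  proof cases
    case (1 as u w bs)
    then have "dcycle V A (as @ u # p # w # bs)"
      using dcycle_insert[of V A as u w bs p] ys \<open>p \<in> V\<close> assms(5) by auto
    moreover have "set (as @ u # p # w # bs) = insert p (set cs)"
      using arg_cong[OF 1(1), of set] ys(2) by auto
    ultimately show thesis
      using that[of "as @ u # p # w # bs"] by blast
  next
    case 2
    obtain qs where qs: "dpath V A qs" "hd qs = p" "last qs \<in> set cs"
        "set (butlast qs) \<inter> set cs = {}"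
      using rtrancl_imp_dpath_first_hit[OF assms(6,7) AV \<open>p \<in> V\<close>] .
    define c' where "c' = last qs"
    obtain zs where zs: "dcycle V A (c' # zs)" "set (c' # zs) = set cs"
      using dcycle_rotate_to[OF cyc qs(3)[folded c'_def]] .
    define bq where "bq = butlast qs"
    have "bq \<noteq> []"
      using qs assms(5) unfolding bq_def by (cases qs rule: rev_cases) auto
    moreover have qs_split: "qs = bq @ [c']"
      using qs(1) unfolding bq_def c'_def by (metis append_butlast_last_id dpath_Nil)
    ultimately have "hd bq = p"
      using qs(2) by (metis hd_append2)
    have "set bq \<inter> set (c' # zs) = {}"
      using zs(2) qs(4) unfolding bq_def by blast
    moreover have "(last (c' # zs), hd bq) \<in> A"
      using 2 zs(2) \<open>hd bq = p\<close> by (metis last_in_set list.distinct(1))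
    ultimately have "dcycle V A ((c' # zs) @ bq)"
      by (rule dcycle_detour[OF zs(1) qs(1)[unfolded qs_split] \<open>bq \<noteq> []\<close>])
    moreover have "p \<in> set bq"
      using \<open>bq \<noteq> []\<close> \<open>hd bq = p\<close> by auto
    ultimately show thesis
      using that[of "(c' # zs) @ bq"] zs(2) by auto
  qed
qed

lemma local_tournament_common_dcycle:
  assumes lt: "local_tournament V A" and "x \<in> V" "x \<noteq> y" "(x, y) \<in> A\<^sup>*" "(y, x) \<in> A\<^sup>*"
  obtains cs where "dcycle V A cs" "x \<in> set cs" "y \<in> set cs"
proof -
  have AV: "A \<subseteq> V \<times> V" and "finite V" and loopless: "\<And>v. (v, v) \<notin> A"
    using lt by (auto simp: local_tournament_def digraph_def loopless_def)
  obtain w where xw: "(x, w) \<in> A" and "(w, y) \<in> A\<^sup>*"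
    using assms(3,4) by (metis converse_rtranclE)
  with assms(5) have "(w, x) \<in> A\<^sup>*"
    by simp
  moreover have "w \<in> V"
    using xw AV by auto
  ultimately obtain ps where ps: "dpath V A ps" "hd ps = w" "last ps = x"
    using rtrancl_imp_dpath_first_hit[of w x A "{x}" V] AV by blast
  have "hd ps \<noteq> last ps"
    using ps(2,3) xw loopless by auto
  then have "2 \<le> length ps"
    using ps(1) by (cases ps rule: rev_cases) (auto simp: Suc_le_eq)
  then have cyc: "dcycle V A ps"
    using ps xw by (auto simp: dcycle_iff_dpath)
  have "x \<in> set ps"
    using ps(1,3) by (metis last_in_set dpath_Nil)
  have "\<exists>cs. dcycle V A cs \<and> x \<in> set cs \<and> y \<in> set cs"
    if "dcycle V A cs0" "x \<in> set cs0" for cs0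
    using that
  proof (induction "card (V - set cs0)" arbitrary: cs0 rule: less_induct)
    case less
    show ?case
    proof (cases "y \<in> set cs0")
      case False
      then obtain c p where cp: "c \<in> set cs0" "p \<notin> set cs0" "(c, p) \<in> A" "(p, y) \<in> A\<^sup>*"
        using rtrancl_leaves_set[OF assms(4) less.prems(2)] by blast
      with assms(5) have "(p, x) \<in> A\<^sup>*"
        by simp
      then obtain cs' where cs': "dcycle V A cs'" "insert p (set cs0) \<subseteq> set cs'"
        using local_tournament_dcycle_absorb[OF lt less.prems(1) cp(1,3,2)] less.prems(2) by blast
      have "p \<in> V"
        using cp(3) AV by auto
      then have "V - set cs' \<subset> V - set cs0"
        using cs'(2) cp(2) by blast
      then have "card (V - set cs') < card (V - set cs0)"
        using \<open>finite V\<close> by (simp add: psubset_card_mono)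
      then show ?thesis
        using less.hyps cs' less.prems(2) by blast
    qed (use less.prems in blast)
  qed
  then show thesis
    using that cyc \<open>x \<in> set ps\<close> by blast
qed

section \<open>\<open>H\<close>-lengths of subpaths of cycles\<close>

lemma obstr_open_take_subset_obstr_closed:
  "obstr_open AH rho (take n xs) \<subseteq> obstr_closed AH rho xs"
proof
  fix i
  assume "i \<in> obstr_open AH rho (take n xs)"
  then have i: "1 \<le> i" "Suc i < length xs" "Suc i < n"
    and "(rho (xs ! (i - 1), xs ! i), rho (xs ! i, xs ! Suc i)) \<notin> AH"
    by (auto simp: obstr_open_def)
  moreover have "(i + length xs - 1) mod length xs = i - 1" "(i + 1) mod length xs = Suc i"
    using i by (simp_all add: mod_if)
  ultimately show "i \<in> obstr_closed AH rho xs"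
    by (simp add: obstr_closed_def)
qed

lemma H_length_open_take_le:
  "H_length_open AH rho (take n xs) \<le> H_length_closed AH rho xs + 1"
proof -
  have "finite (obstr_closed AH rho xs)"
    by (simp add: obstr_closed_def)
  then show ?thesis
    unfolding H_length_open_def H_length_closed_def
    using card_mono[OF _ obstr_open_take_subset_obstr_closed] by simp
qed

definition H_reaches ::
  "'a set \<Rightarrow> ('a \<times> 'a) set \<Rightarrow> ('c \<times> 'c) set \<Rightarrow> ('a \<times> 'a \<Rightarrow> 'c) \<Rightarrow> nat \<Rightarrow> 'a \<Rightarrow> 'a \<Rightarrow> bool" where
  "H_reaches V A AH rho m x y \<longleftrightarrow>
     (\<exists>ps. dpath V A ps \<and> hd ps = x \<and> last ps = y \<and> H_length_open AH rho ps \<le> m)"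

lemma H_reaches_refl:
  "x \<in> V \<Longrightarrow> 1 \<le> m \<Longrightarrow> H_reaches V A AH rho m x x"
  unfolding H_reaches_def H_length_open_def obstr_open_def by (intro exI[of _ "[x]"]) simp

lemma H_reaches_on_dcycle:
  assumes bound: "\<forall>cs. dcycle V A cs \<longrightarrow> H_length_closed AH rho cs \<le> m"
    and "dcycle V A cs" "x \<in> set cs" "y \<in> set cs"
  shows "H_reaches V A AH rho (m + 1) x y"
proof -
  obtain ys where ys: "dcycle V A (x # ys)" "set (x # ys) = set cs"
    using dcycle_rotate_to[OF assms(2,3)] .
  with assms(4) obtain as bs where split: "x # ys = as @ y # bs"
    by (metis split_list)
  define ps where "ps = as @ [y]"
  have "ps = take (Suc (length as)) (x # ys)"
    unfolding ps_def split by simp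
  then have "H_length_open AH rho ps \<le> H_length_closed AH rho (x # ys) + 1"
    using H_length_open_take_le by metis
  also have "\<dots> \<le> m + 1"
    using bound ys(1) by simp
  finally have "H_length_open AH rho ps \<le> m + 1" .
  moreover have "dpath V A (ps @ bs)"
    using ys(1) split unfolding ps_def by (simp add: dcycle_iff_dpath)
  then have "dpath V A ps"
    using dpath_append[of ps bs V A] unfolding ps_def by (cases "bs = []") auto
  moreover have "hd ps = x"
    using split unfolding ps_def by (cases as) auto
  ultimately show ?thesis
    unfolding H_reaches_def ps_def by auto
qed

lemma local_tournament_H_reaches_if_mutually_reachable:
  assumes "local_tournament V A"
    and "\<forall>cs. dcycle V A cs \<longrightarrow> H_length_closed AH rho cs \<le> m"
    and "x \<in> V" "(x, y) \<in> A\<^sup>*" "(y, x) \<in> A\<^sup>*"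
  shows "H_reaches V A AH rho (m + 1) x y"
proof (cases "x = y")
  case False
  then obtain cs where "dcycle V A cs" "x \<in> set cs" "y \<in> set cs"
    using local_tournament_common_dcycle assms(1,3-5) by metis
  then show ?thesis
    using H_reaches_on_dcycle assms(2) by metis
qed (use H_reaches_refl[OF assms(3), of "m + 1"] in simp)

lemma local_tournament_H_reaches_one_way:
  assumes "local_tournament V A"
    and "\<forall>cs. dcycle V A cs \<longrightarrow> H_length_closed AH rho cs \<le> m"
    and "y \<in> V" "H_reaches V A AH rho (m + 1) x y" "\<not> H_reaches V A AH rho (m + 1) y x"
  shows "(x, y) \<in> A\<^sup>* \<and> (y, x) \<notin> A\<^sup>*"
proof
  show "(x, y) \<in> A\<^sup>*"
    using assms(4) dpath_imp_rtrancl unfolding H_reaches_def by blast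
  then show "(y, x) \<notin> A\<^sup>*"
    using local_tournament_H_reaches_if_mutually_reachable[OF assms(1-3)] assms(5) by blast
qed

section \<open>Kernels of relations\<close>

definition rel_kernel :: "'a set \<Rightarrow> ('a \<Rightarrow> 'a \<Rightarrow> bool) \<Rightarrow> 'a set \<Rightarrow> bool" where
  "rel_kernel W R S \<longleftrightarrow>
     S \<subseteq> W \<and> (\<forall>u\<in>S. \<forall>v\<in>S. u \<noteq> v \<longrightarrow> \<not> R u v) \<and> (\<forall>x\<in>W - S. \<exists>s\<in>S. R x s)"

lemma rel_kernel_insert:
  assumes "rel_kernel W R S" "\<forall>s\<in>S. R s x \<longrightarrow> R x s"
  obtains S' where "rel_kernel (insert x W) R S'"
proof (cases "\<exists>s\<in>S. R x s")
  case True
  with assms(1) have "rel_kernel (insert x W) R S"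
    by (auto simp: rel_kernel_def)
  then show thesis
    by (rule that)
next
  case False
  with assms have "rel_kernel (insert x W) R (insert x S)"
    by (auto simp: rel_kernel_def)
  then show thesis
    by (rule that)
qed

lemma rel_kernel_exists:
  assumes "finite W"
    and one_way: "\<And>x y. x \<in> W \<Longrightarrow> y \<in> W \<Longrightarrow> R x y \<Longrightarrow> \<not> R y x \<Longrightarrow>
      (x, y) \<in> T\<^sup>* \<and> (y, x) \<notin> T\<^sup>*"
  obtains S where "rel_kernel W R S"
proof -
  define rank where "rank w = card {v \<in> W. (w, v) \<in> T\<^sup>*}" for w
  have "U \<subseteq> W \<longrightarrow> (\<exists>S. rel_kernel U R S)" if "finite U" for U
    using that
  proof (induction U rule: finite_ranking_induct[where f = rank])
    case empty
    show ?case
      by (auto simp: rel_kernel_def)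
  next
    case (insert x U)
    show ?case
    proof
      assume sub: "insert x U \<subseteq> W"
      with insert.IH obtain S where S: "rel_kernel U R S"
        by blast
      have "R x s" if "s \<in> S" "R s x" for s
      proof (rule ccontr)
        assume "\<not> R x s"
        moreover have "s \<in> U"
          using S that(1) by (auto simp: rel_kernel_def)
        ultimately have strict: "(s, x) \<in> T\<^sup>*" "(x, s) \<notin> T\<^sup>*"
          using one_way[of s x] sub that(2) by auto
        then have "{v \<in> W. (x, v) \<in> T\<^sup>*} \<subset> {v \<in> W. (s, v) \<in> T\<^sup>*}"
          using \<open>s \<in> U\<close> sub by (auto intro: rtrancl_trans)
        then have "rank x < rank s"
          unfolding rank_def using \<open>finite W\<close> by (simp add: psubset_card_mono)
        then show False
          using insert.hyps(2)[OF \<open>s \<in> U\<close>] by simp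
      qed
      then show "\<exists>S'. rel_kernel (insert x U) R S'"
        using rel_kernel_insert[OF S] by blast
    qed
  qed
  then show thesis
    using that assms(1) by blast
qed

lemma kH_kernel_iff_rel_kernel:
  "kH_kernel V A AH rho k S \<longleftrightarrow> rel_kernel V (H_reaches V A AH rho (k - 1)) S"
proof -
  have "k \<le> H_length_open AH rho ps \<longleftrightarrow> \<not> H_length_open AH rho ps \<le> k - 1" for ps
    by (auto simp: H_length_open_def)
  then show ?thesis
    unfolding kH_kernel_def rel_kernel_def H_reaches_def by blast
qed

theorem corollary29:
  fixes V :: "'a set" and A :: "('a \<times> 'a) set"
    and VH :: "'c set" and AH :: "('c \<times> 'c) set"
    and rho :: "'a \<times> 'a \<Rightarrow> 'c" and k :: nat
  assumes "k \<ge> 2"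
    and "local_tournament V A"
    and "H_colored A VH AH rho"
    and "\<forall>xs. dcycle V A xs \<longrightarrow> H_length_closed AH rho xs \<le> k - 2"
  shows "\<exists>S. kH_kernel V A AH rho k S"
proof -
  have "k - 1 = (k - 2) + 1"
    using assms(1) by simp
  then have "(x, y) \<in> A\<^sup>* \<and> (y, x) \<notin> A\<^sup>*"
    if "y \<in> V" "H_reaches V A AH rho (k - 1) x y" "\<not> H_reaches V A AH rho (k - 1) y x" for x y
    using local_tournament_H_reaches_one_way[OF assms(2,4)] that by simp
  moreover have "finite V"
    using assms(2) by (simp add: local_tournament_def digraph_def)
  ultimately obtain S where "rel_kernel V (H_reaches V A AH rho (k - 1)) S"
    using rel_kernel_exists by metis
  then show ?thesis
    using kH_kernel_iff_rel_kernel by blast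
qed

end
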